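(* Let $K_1,\dots,K_M$ be matrices with $K_i\in\mathbb{R}^{p\times d_i}$ having orthonormal columns, and suppose $\mathrm{span}[K_1\,K_2\,\cdots\,K_M]=\mathbb{R}^p$. Let $A_i=\{\mathbf a\in\mathbb{R}^p:\ \exists\,\alpha^i\in\mathbb{R}^{d_i},\ \mathbf a=K_i\alpha^i,\ \|\mathbf a\|=\|\alpha^i\|=1\}$ and $\mathcal A=\bigcup_{i=1}^M A_i$. Then for every $\mathbf x\in\mathbb{R}^p$ the atomic norm satisfies \[\|\mathbf x\|_{\mathcal A}=\min_{\mathbf x=\sum_i K_i\alpha^i}\ \sum_{i=1}^M\|\alpha^i\|,\] where the minimum is over all families $\alpha^i\in\mathbb{R}^{d_i}$, $i=1,\dots,M$, with $\mathbf x=\sum_i K_i\alpha^i$.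
   Context: For a set of atoms $\mathcal A\subset\mathbb{R}^p$, the atomic norm of $\mathbf x\in\mathbb{R}^p$ is $\|\mathbf x\|_{\mathcal A}=\inf\{\sum_{\mathbf a\in\mathcal A}c_{\mathbf a}:\ \mathbf x=\sum_{\mathbf a\in\mathcal A}c_{\mathbf a}\mathbf a,\ c_{\mathbf a}\ge 0\}$ (only countably many, in fact finitely many, $c_{\mathbf a}$ nonzero). All norms without subscript are Euclidean norms. *)

theory Defs
  imports "HOL-Analysis.Analysis"
begin

definition atomic_norm :: "'a::real_vector set \<Rightarrow> 'a \<Rightarrow> real" where
  "atomic_norm A x = Inf {(\<Sum>a\<in>S. c a) | S c. finite S \<and> S \<subseteq> A \<and>
       (\<forall>a\<in>S. 0 \<le> c a) \<and> x = (\<Sum>a\<in>S. c a *\<^sub>R a)}"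

definition coord_norm :: "nat \<Rightarrow> (nat \<Rightarrow> real) \<Rightarrow> real" where
  "coord_norm d \<alpha> = sqrt (\<Sum>j<d. (\<alpha> j)\<^sup>2)"

text \<open>The p x d matrix with columns Kc 0, ..., Kc (d-1), applied to \<alpha>.\<close>
definition mat_apply :: "nat \<Rightarrow> (nat \<Rightarrow> 'a::real_vector) \<Rightarrow> (nat \<Rightarrow> real) \<Rightarrow> 'a" where
  "mat_apply d Kc \<alpha> = (\<Sum>j<d. \<alpha> j *\<^sub>R Kc j)"

end

theory Submission
  imports Defs
begin

text \<open>Since K_i has orthonormal columns it is an isometry, so a representation
  x = (SUM i. K_i alpha_i) is the conic combination of the atoms K_i alpha_i / |alpha_i| with
  weights |alpha_i|, of cost SUM i. |alpha_i|. Conversely, grouping the atoms of any conic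
  combination by their block and applying the triangle inequality within each block gives a
  representation of no larger cost. Hence the atomic norm is the infimum of the cost over all
  representations. The spanning hypothesis makes this set nonempty, and since representations
  of bounded cost have bounded coefficients, a minimising sequence has a convergent
  subsequence whose limit attains the infimum.\<close>

definition conic_rep :: "'a::real_vector set \<Rightarrow> 'a \<Rightarrow> 'a set \<Rightarrow> ('a \<Rightarrow> real) \<Rightarrow> bool" where
  "conic_rep A x S c \<longleftrightarrow> finite S \<and> S \<subseteq> A \<and> (\<forall>a\<in>S. 0 \<le> c a) \<and> x = (\<Sum>a\<in>S. c a *\<^sub>R a)"

lemma atomic_norm_conic_rep: "atomic_norm A x = Inf {sum c S | S c. conic_rep A x S c}"
  by (simp add: atomic_norm_def conic_rep_def)

lemma bdd_below_conic_rep_costs: "bdd_below {sum c S | S c. conic_rep A x S c}"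
  by (rule bdd_belowI[of _ 0]) (auto simp: conic_rep_def intro: sum_nonneg)

lemma atomic_norm_le_conic_rep: "conic_rep A x S c \<Longrightarrow> atomic_norm A x \<le> sum c S"
  unfolding atomic_norm_conic_rep by (rule cInf_lower[OF _ bdd_below_conic_rep_costs]) blast

lemma atomic_norm_greatest:
  assumes "conic_rep A x S c"
    and "\<And>S c. conic_rep A x S c \<Longrightarrow> m \<le> sum c S"
  shows "m \<le> atomic_norm A x"
  unfolding atomic_norm_conic_rep using assms by (intro cInf_greatest) auto

text \<open>The atoms a i need not be distinct; coinciding ones are merged.\<close>
lemma conic_rep_family:
  assumes "finite I" "\<And>i. i \<in> I \<Longrightarrow> a i \<in> A" "\<And>i. i \<in> I \<Longrightarrow> 0 \<le> w i"
  shows "\<exists>S c. conic_rep A (\<Sum>i\<in>I. w i *\<^sub>R a i) S c \<and> sum c S = (\<Sum>i\<in>I. w i)"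
proof (intro exI conjI)
  define c where "c v = (\<Sum>i\<in>{i\<in>I. a i = v}. w i)" for v
  show "sum c (a ` I) = (\<Sum>i\<in>I. w i)"
    unfolding c_def using sum.image_gen[OF assms(1), of w a] by simp
  have "(\<Sum>v\<in>a ` I. c v *\<^sub>R v) = (\<Sum>v\<in>a ` I. \<Sum>i\<in>{i\<in>I. a i = v}. w i *\<^sub>R a i)"
    unfolding c_def scaleR_sum_left by (intro sum.cong refl) auto
  also have "\<dots> = (\<Sum>i\<in>I. w i *\<^sub>R a i)"
    using sum.image_gen[OF assms(1), of "\<lambda>i. w i *\<^sub>R a i" a] by simp
  finally show "conic_rep A (\<Sum>i\<in>I. w i *\<^sub>R a i) (a ` I) c"
    using assms by (auto simp: conic_rep_def c_def intro!: sum_nonneg)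
qed

lemma coord_norm_nonneg: "0 \<le> coord_norm d \<beta>"
  by (simp add: coord_norm_def sum_nonneg)

lemma abs_le_coord_norm: "j < d \<Longrightarrow> \<bar>\<beta> j\<bar> \<le> coord_norm d \<beta>"
  unfolding coord_norm_def
  by (metis real_sqrt_abs real_sqrt_le_mono finite_lessThan lessThan_iff member_le_sum zero_le_power2)

lemma tendsto_coord_norm:
  assumes "\<And>j. j < d \<Longrightarrow> (\<lambda>n. s n j) \<longlonglongrightarrow> \<beta> j"
  shows "(\<lambda>n. coord_norm d (s n)) \<longlonglongrightarrow> coord_norm d \<beta>"
  unfolding coord_norm_def using assms by (intro tendsto_intros) auto

lemma mat_apply_scaleR: "mat_apply d Kc (\<lambda>j. t * \<beta> j) = t *\<^sub>R mat_apply d Kc \<beta>"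
  by (simp add: mat_apply_def scaleR_sum_right)

lemma mat_apply_add: "mat_apply d Kc (\<lambda>j. \<beta> j + \<gamma> j) = mat_apply d Kc \<beta> + mat_apply d Kc \<gamma>"
  by (simp add: mat_apply_def scaleR_add_left sum.distrib)

lemma mat_apply_sum:
  "mat_apply d Kc (\<lambda>j. \<Sum>a\<in>T. c a * g a j) = (\<Sum>a\<in>T. c a *\<^sub>R mat_apply d Kc (g a))"
  unfolding mat_apply_def by (simp add: scaleR_sum_left scaleR_sum_right sum.swap[of _ T])

lemma mat_apply_unit: "k < d \<Longrightarrow> mat_apply d Kc (\<lambda>j. if j = k then 1 else 0) = Kc k"
  by (simp add: mat_apply_def if_distrib[of "\<lambda>t. t *\<^sub>R _"] sum.delta' cong: if_cong)

lemma tendsto_mat_apply: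
  fixes Kc :: "nat \<Rightarrow> 'a::real_normed_vector"
  assumes "\<And>j. j < d \<Longrightarrow> (\<lambda>n. s n j) \<longlonglongrightarrow> \<beta> j"
  shows "(\<lambda>n. mat_apply d Kc (s n)) \<longlonglongrightarrow> mat_apply d Kc \<beta>"
  unfolding mat_apply_def using assms by (intro tendsto_intros) auto

lemma norm_mat_apply_orthonormal:
  assumes "\<And>j k. j < d \<Longrightarrow> k < d \<Longrightarrow> Kc j \<bullet> Kc k = (if j = k then 1 else (0::real))"
  shows "norm (mat_apply d Kc \<beta>) = coord_norm d \<beta>"
proof -
  have "mat_apply d Kc \<beta> \<bullet> mat_apply d Kc \<beta> = (\<Sum>j<d. \<Sum>k<d. \<beta> j * (\<beta> k * (Kc k \<bullet> Kc j)))"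
    by (simp add: mat_apply_def inner_sum_left inner_sum_right sum_distrib_left mult.assoc)
  also have "\<dots> = (\<Sum>j<d. (\<beta> j)\<^sup>2)"
    by (rule sum.cong) (auto simp: assms if_distrib power2_eq_square cong: if_cong)
  finally show ?thesis by (simp add: norm_eq_sqrt_inner coord_norm_def)
qed

lemma bounded_coords_convergent_subseq:
  fixes s :: "nat \<Rightarrow> 'q \<Rightarrow> real"
  assumes "finite P" "\<And>p. p \<in> P \<Longrightarrow> bounded (range (\<lambda>n. s n p))"
  shows "\<exists>r l. strict_mono r \<and> (\<forall>p\<in>P. (\<lambda>n. s (r n) p) \<longlonglongrightarrow> l p)"
  using assms
proof (induction P rule: finite_induct)
  case empty
  then show ?case by (auto intro: strict_mono_id)
next
  case (insert p F)
  then obtain r l where r: "strict_mono r" "\<forall>q\<in>F. (\<lambda>n. s (r n) q) \<longlonglongrightarrow> l q"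
    by auto
  have "bounded (range (\<lambda>n. s (r n) p))"
    using insert.prems by (rule bounded_subset) auto
  then obtain lp r' where r': "strict_mono r'" "((\<lambda>n. s (r n) p) \<circ> r') \<longlonglongrightarrow> lp"
    using bounded_imp_convergent_subsequence by blast
  have "(\<lambda>n. s (r (r' n)) q) \<longlonglongrightarrow> (l(p := lp)) q" if "q \<in> insert p F" for q
    using that r' LIMSEQ_subseq_LIMSEQ[OF bspec[OF r(2)] r'(1)] insert.hyps(2)
    by (auto simp: o_def)
  then show ?case
    using strict_mono_o[OF r(1) r'(1)]
    by (intro exI[of _ "r \<circ> r'"] exI[of _ "l(p := lp)"]) (auto simp: o_def)
qed

locale orthonormal_blocks =
  fixes M :: nat and d :: "nat \<Rightarrow> nat" and K :: "nat \<Rightarrow> nat \<Rightarrow> 'a::real_inner"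
  assumes orthonormal: "\<And>i j k. i < M \<Longrightarrow> j < d i \<Longrightarrow> k < d i \<Longrightarrow>
    K i j \<bullet> K i k = (if j = k then 1 else 0)"
begin

definition synth :: "(nat \<Rightarrow> nat \<Rightarrow> real) \<Rightarrow> 'a" where
  "synth \<alpha> = (\<Sum>i<M. mat_apply (d i) (K i) (\<alpha> i))"

definition cost :: "(nat \<Rightarrow> nat \<Rightarrow> real) \<Rightarrow> real" where
  "cost \<alpha> = (\<Sum>i<M. coord_norm (d i) (\<alpha> i))"

definition atoms :: "'a set" where
  "atoms = (\<Union>i<M. {a. \<exists>\<beta>. a = mat_apply (d i) (K i) \<beta> \<and> norm a = 1 \<and> coord_norm (d i) \<beta> = 1})"

lemma norm_block: "i < M \<Longrightarrow> norm (mat_apply (d i) (K i) \<beta>) = coord_norm (d i) \<beta>"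
  by (rule norm_mat_apply_orthonormal) (simp add: orthonormal)

lemma cost_nonneg: "0 \<le> cost \<alpha>"
  by (simp add: cost_def sum_nonneg coord_norm_nonneg)

lemma abs_coeff_le_cost:
  assumes "i < M" "j < d i"
  shows "\<bar>\<alpha> i j\<bar> \<le> cost \<alpha>"
proof -
  have "\<bar>\<alpha> i j\<bar> \<le> coord_norm (d i) (\<alpha> i)"
    using assms(2) by (rule abs_le_coord_norm)
  also have "\<dots> \<le> cost \<alpha>"
    unfolding cost_def using assms(1) by (intro member_le_sum) (auto simp: coord_norm_nonneg)
  finally show ?thesis .
qed

lemma conic_rep_synth: "\<exists>S c. conic_rep atoms (synth \<alpha>) S c \<and> sum c S = cost \<alpha>"
proof -
  define I where "I = {i. i < M \<and> coord_norm (d i) (\<alpha> i) \<noteq> 0}"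
  define w where "w i = coord_norm (d i) (\<alpha> i)" for i
  define atom where "atom i = mat_apply (d i) (K i) (\<lambda>j. (1 / w i) * \<alpha> i j)" for i
  have w_pos: "0 < w i" if "i \<in> I" for i
    using that coord_norm_nonneg[of "d i" "\<alpha> i"] by (auto simp: I_def w_def)
  have atom: "atom i \<in> atoms" "w i *\<^sub>R atom i = mat_apply (d i) (K i) (\<alpha> i)" if "i \<in> I" for i
  proof -
    have "i < M" using that by (simp add: I_def)
    have "norm (atom i) = 1"
      unfolding atom_def mat_apply_scaleR using norm_block[OF \<open>i < M\<close>] w_pos[OF that]
      by (simp add: w_def)
    moreover have "coord_norm (d i) (\<lambda>j. (1 / w i) * \<alpha> i j) = 1"
      using calculation norm_block[OF \<open>i < M\<close>] by (simp add: atom_def)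
    ultimately show "atom i \<in> atoms"
      using \<open>i < M\<close> unfolding atoms_def atom_def by blast
    show "w i *\<^sub>R atom i = mat_apply (d i) (K i) (\<alpha> i)"
      unfolding atom_def mat_apply_scaleR using w_pos[OF that] by simp
  qed
  have "(\<Sum>i\<in>I. w i *\<^sub>R atom i) = synth \<alpha>"
    unfolding synth_def using atom(2)
    by (intro sum.mono_neutral_cong_left) (auto simp: I_def w_def simp flip: norm_block)
  moreover have "(\<Sum>i\<in>I. w i) = cost \<alpha>"
    unfolding cost_def w_def by (rule sum.mono_neutral_left) (auto simp: I_def)
  ultimately show ?thesis
    using conic_rep_family[of I atom atoms w] atom(1) w_pos by (force simp: I_def)
qed

lemma synth_of_conic_rep:
  assumes "conic_rep atoms x S c"
  shows "\<exists>\<alpha>. synth \<alpha> = x \<and> cost \<alpha> \<le> sum c S"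
proof -
  have S: "finite S" "\<forall>a\<in>S. 0 \<le> c a" "x = (\<Sum>a\<in>S. c a *\<^sub>R a)"
    using assms by (auto simp: conic_rep_def)
  have "\<forall>a\<in>S. \<exists>i \<beta>. i < M \<and> a = mat_apply (d i) (K i) \<beta> \<and> norm a = 1"
    using assms unfolding conic_rep_def atoms_def by blast
  then obtain blk \<beta> where blk: "\<And>a. a \<in> S \<Longrightarrow>
      blk a < M \<and> a = mat_apply (d (blk a)) (K (blk a)) (\<beta> a) \<and> norm a = 1"
    by metis
  define G where "G i = {a\<in>S. blk a = i}" for i
  define \<alpha> where "\<alpha> i j = (\<Sum>a\<in>G i. c a * \<beta> a j)" for i j
  have block: "mat_apply (d i) (K i) (\<alpha> i) = (\<Sum>a\<in>G i. c a *\<^sub>R a)" for i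
    unfolding \<alpha>_def mat_apply_sum using blk by (intro sum.cong) (auto simp: G_def)
  have group: "(\<Sum>i<M. \<Sum>a\<in>G i. g a) = sum g S" for g :: "'a \<Rightarrow> 'b::comm_monoid_add"
    unfolding G_def using blk S(1) by (intro sum.group) auto
  have "cost \<alpha> = (\<Sum>i<M. norm (\<Sum>a\<in>G i. c a *\<^sub>R a))"
    unfolding cost_def by (intro sum.cong) (simp_all add: block flip: norm_block)
  also have "\<dots> \<le> (\<Sum>i<M. \<Sum>a\<in>G i. norm (c a *\<^sub>R a))"
    by (intro sum_mono norm_sum)
  also have "\<dots> = sum c S"
    unfolding group using S(2) blk by (intro sum.cong) auto
  finally show ?thesis
    using S(3) by (intro exI[of _ \<alpha>]) (simp add: synth_def block group)
qed

lemma synth_surj: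
  assumes "span {K i j | i j. i < M \<and> j < d i} = UNIV"
  shows "\<exists>\<alpha>. synth \<alpha> = x"
proof -
  have "0 \<in> range synth"
    by (rule range_eqI[where x = "\<lambda>i j. 0"]) (simp add: synth_def mat_apply_def)
  moreover have "synth \<alpha> + synth \<gamma> \<in> range synth" for \<alpha> \<gamma>
    by (rule range_eqI[where x = "\<lambda>i j. \<alpha> i j + \<gamma> i j"])
      (simp add: synth_def mat_apply_add sum.distrib)
  moreover have "t *\<^sub>R synth \<alpha> \<in> range synth" for t \<alpha>
    by (rule range_eqI[where x = "\<lambda>i j. t * \<alpha> i j"])
      (simp add: synth_def mat_apply_scaleR scaleR_sum_right)
  ultimately have "subspace (range synth)"
    unfolding subspace_def by blast
  moreover have "K i k \<in> range synth" if "i < M" "k < d i" for i k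
  proof (rule range_eqI)
    have "mat_apply (d i') (K i') (\<lambda>j. if i' = i \<and> j = k then 1 else 0)
        = (if i' = i then K i k else 0)" for i'
    proof (cases "i' = i")
      case True
      then show ?thesis using mat_apply_unit[OF \<open>k < d i\<close>, of "K i"] by simp
    qed (simp add: mat_apply_def)
    then show "K i k = synth (\<lambda>i' j. if i' = i \<and> j = k then 1 else 0)"
      using \<open>i < M\<close> by (simp add: synth_def)
  qed
  ultimately have "span {K i j | i j. i < M \<and> j < d i} \<subseteq> range synth"
    by (intro span_minimal) auto
  with assms show ?thesis by (metis UNIV_I rangeE subsetD)
qed

lemma synth_cost_tendsto:
  assumes "\<And>i j. i < M \<Longrightarrow> j < d i \<Longrightarrow> (\<lambda>n. s n i j) \<longlonglongrightarrow> \<alpha> i j"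
  shows "(\<lambda>n. synth (s n)) \<longlonglongrightarrow> synth \<alpha>" "(\<lambda>n. cost (s n)) \<longlonglongrightarrow> cost \<alpha>"
  unfolding synth_def cost_def using assms
  by (auto intro!: tendsto_sum tendsto_mat_apply tendsto_coord_norm)

lemma cost_attains_min:
  assumes "synth \<alpha>' = x"
  shows "\<exists>\<alpha>. synth \<alpha> = x \<and> (\<forall>\<gamma>. synth \<gamma> = x \<longrightarrow> cost \<alpha> \<le> cost \<gamma>)"
proof -
  define m where "m = Inf (cost ` {\<gamma>. synth \<gamma> = x})"
  have bdd: "bdd_below (cost ` {\<gamma>. synth \<gamma> = x})"
    using cost_nonneg by (intro bdd_belowI[of _ 0]) auto
  have m_le: "m \<le> cost \<gamma>" if "synth \<gamma> = x" for \<gamma>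
    unfolding m_def using bdd that by (auto intro: cInf_lower)
  have "\<exists>\<gamma>. synth \<gamma> = x \<and> cost \<gamma> < m + inverse (Suc n)" for n
    using cInf_lessD[of "cost ` {\<gamma>. synth \<gamma> = x}" "m + inverse (Suc n)"] assms
    by (auto simp: m_def)
  then obtain s where s: "\<And>n. synth (s n) = x" "\<And>n. cost (s n) < m + inverse (Suc n)"
    by metis
  have "(\<lambda>n. cost (s n)) \<longlonglongrightarrow> m"
    using m_le s by (intro real_tendsto_sandwich[OF _ _ tendsto_const LIMSEQ_inverse_real_of_nat_add])
      (auto intro!: always_eventually less_imp_le)
  have "bounded (range (\<lambda>n. s n i j))" if "(i, j) \<in> Sigma {..<M} (\<lambda>i. {..<d i})" for i j
  proof -
    have "\<bar>s n i j\<bar> \<le> m + 1" for n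
      using abs_coeff_le_cost[of i j "s n"] s(2)[of n] that
        inverse_le_1_iff[of "real (Suc n)"] by auto
    then show ?thesis unfolding bounded_real by blast
  qed
  then obtain r l where r: "strict_mono r"
    "\<And>i j. i < M \<Longrightarrow> j < d i \<Longrightarrow> (\<lambda>n. s (r n) i j) \<longlonglongrightarrow> l (i, j)"
    using bounded_coords_convergent_subseq[of "Sigma {..<M} (\<lambda>i. {..<d i})" "\<lambda>n (i, j). s n i j"]
    by fastforce
  define \<alpha> where "\<alpha> i j = l (i, j)" for i j
  have conv: "\<And>i j. i < M \<Longrightarrow> j < d i \<Longrightarrow> (\<lambda>n. s (r n) i j) \<longlonglongrightarrow> \<alpha> i j"
    using r(2) by (simp add: \<alpha>_def)
  have lim: "(\<lambda>n. synth (s (r n))) \<longlonglongrightarrow> synth \<alpha>" "(\<lambda>n. cost (s (r n))) \<longlonglongrightarrow> cost \<alpha>"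
    by (intro synth_cost_tendsto conv; assumption)+
  from lim(1) have "(\<lambda>n. x) \<longlonglongrightarrow> synth \<alpha>"
    using s(1) by simp
  then have "synth \<alpha> = x"
    using LIMSEQ_unique[OF tendsto_const] by metis
  moreover have "cost \<alpha> = m"
    using LIMSEQ_unique[OF lim(2)
        LIMSEQ_subseq_LIMSEQ[OF \<open>(\<lambda>n. cost (s n)) \<longlonglongrightarrow> m\<close> r(1), unfolded o_def]] .
  ultimately show ?thesis using m_le by auto
qed

lemma atomic_norm_eq_min_cost:
  assumes "synth \<alpha> = x" "\<And>\<gamma>. synth \<gamma> = x \<Longrightarrow> cost \<alpha> \<le> cost \<gamma>"
  shows "atomic_norm atoms x = cost \<alpha>"
proof (rule antisym)
  show "atomic_norm atoms x \<le> cost \<alpha>"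
    using conic_rep_synth[of \<alpha>] atomic_norm_le_conic_rep assms(1) by metis
  show "cost \<alpha> \<le> atomic_norm atoms x"
    using conic_rep_synth[of \<alpha>] assms synth_of_conic_rep
    by (metis atomic_norm_greatest order_trans)
qed

end

theorem lemma1:
  fixes M :: nat and d :: "nat \<Rightarrow> nat"
    and K :: "nat \<Rightarrow> nat \<Rightarrow> real ^ 'p"
    and x :: "real ^ 'p"
  assumes orthonormal: "\<And>i j k. i < M \<Longrightarrow> j < d i \<Longrightarrow> k < d i \<Longrightarrow>
             K i j \<bullet> K i k = (if j = k then 1 else 0)"
    and spanning: "span {K i j | i j. i < M \<and> j < d i} = UNIV"
  shows "(\<exists>\<alpha>. x = (\<Sum>i<M. mat_apply (d i) (K i) (\<alpha> i)) \<and>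
              atomic_norm (\<Union>i<M. {a. \<exists>\<beta>. a = mat_apply (d i) (K i) \<beta> \<and> norm a = 1 \<and> coord_norm (d i) \<beta> = 1}) x
                = (\<Sum>i<M. coord_norm (d i) (\<alpha> i)))
       \<and> (\<forall>\<alpha>. x = (\<Sum>i<M. mat_apply (d i) (K i) (\<alpha> i)) \<longrightarrow>
              atomic_norm (\<Union>i<M. {a. \<exists>\<beta>. a = mat_apply (d i) (K i) \<beta> \<and> norm a = 1 \<and> coord_norm (d i) \<beta> = 1}) x
                \<le> (\<Sum>i<M. coord_norm (d i) (\<alpha> i)))"
proof -
  interpret orthonormal_blocks M d K
    using orthonormal by unfold_locales
  obtain \<alpha> where rep: "synth \<alpha> = x" and min: "\<And>\<gamma>. synth \<gamma> = x \<Longrightarrow> cost \<alpha> \<le> cost \<gamma>"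
    using cost_attains_min synth_surj[OF spanning] by metis
  have "atomic_norm atoms x = cost \<alpha>"
    using rep min by (rule atomic_norm_eq_min_cost)
  then have "(\<exists>\<alpha>. synth \<alpha> = x \<and> atomic_norm atoms x = cost \<alpha>)
      \<and> (\<forall>\<gamma>. synth \<gamma> = x \<longrightarrow> atomic_norm atoms x \<le> cost \<gamma>)"
    using rep min by auto
  then show ?thesis
    unfolding synth_def cost_def atoms_def by (metis (no_types, lifting))
qed

end
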